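(* Let $L$ be a finite-dimensional Lie algebra over an algebraically closed field $F$ of any characteristic. Then $L$ has a maximal subalgebra $M$ that is abelian if and only if either (i) $L$ has an abelian ideal of codimension one in $L$; or (ii) $L^{(1)}$ has dimension one and $\phi(L)=0$. In either case, $L$ is completely solvable.
   Context: $L^{(1)}=[L,L]$. $L$ is completely solvable if $L^{(1)}$ is nilpotent. $\phi(L)$ is the Frattini ideal: the largest ideal of $L$ contained in the intersection of all maximal subalgebras of $L$. *)

theory Defs
  imports Main "HOL-Computational_Algebra.Polynomial"
begin

definition alg_closed_field :: "'a::field itself \<Rightarrow> bool" where
  "alg_closed_field _ \<longleftrightarrow> (\<forall>p :: 'a poly. degree p > 0 \<longrightarrow> (\<exists>x. poly p x = 0))"

definition lie_algebra :: "('a::field \<Rightarrow> 'v::ab_group_add \<Rightarrow> 'v) \<Rightarrow> ('v \<Rightarrow> 'v \<Rightarrow> 'v) \<Rightarrow> bool" where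
  "lie_algebra sc br \<longleftrightarrow> vector_space sc
     \<and> (\<forall>x. Vector_Spaces.linear sc sc (br x))
     \<and> (\<forall>y. Vector_Spaces.linear sc sc (\<lambda>x. br x y))
     \<and> (\<forall>x. br x x = 0)
     \<and> (\<forall>x y z. br x (br y z) + br y (br z x) + br z (br x y) = 0)"

definition fin_dim :: "('a::field \<Rightarrow> 'v::ab_group_add \<Rightarrow> 'v) \<Rightarrow> bool" where
  "fin_dim sc \<longleftrightarrow> (\<exists>B. finite B \<and> module.span sc B = UNIV)"

definition lie_subalgebra :: "('a::field \<Rightarrow> 'v::ab_group_add \<Rightarrow> 'v) \<Rightarrow> ('v \<Rightarrow> 'v \<Rightarrow> 'v) \<Rightarrow> 'v set \<Rightarrow> bool" where
  "lie_subalgebra sc br S \<longleftrightarrow> module.subspace sc S \<and> (\<forall>x\<in>S. \<forall>y\<in>S. br x y \<in> S)"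

definition lie_ideal :: "('a::field \<Rightarrow> 'v::ab_group_add \<Rightarrow> 'v) \<Rightarrow> ('v \<Rightarrow> 'v \<Rightarrow> 'v) \<Rightarrow> 'v set \<Rightarrow> bool" where
  "lie_ideal sc br I \<longleftrightarrow> module.subspace sc I \<and> (\<forall>x. \<forall>y\<in>I. br x y \<in> I)"

definition maximal_subalgebra :: "('a::field \<Rightarrow> 'v::ab_group_add \<Rightarrow> 'v) \<Rightarrow> ('v \<Rightarrow> 'v \<Rightarrow> 'v) \<Rightarrow> 'v set \<Rightarrow> bool" where
  "maximal_subalgebra sc br M \<longleftrightarrow> lie_subalgebra sc br M \<and> M \<noteq> UNIV
     \<and> (\<forall>N. lie_subalgebra sc br N \<and> M \<subseteq> N \<longrightarrow> N = M \<or> N = UNIV)"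

definition abelian_set :: "('v::ab_group_add \<Rightarrow> 'v \<Rightarrow> 'v) \<Rightarrow> 'v set \<Rightarrow> bool" where
  "abelian_set br S \<longleftrightarrow> (\<forall>x\<in>S. \<forall>y\<in>S. br x y = 0)"

definition derived_algebra :: "('a::field \<Rightarrow> 'v::ab_group_add \<Rightarrow> 'v) \<Rightarrow> ('v \<Rightarrow> 'v \<Rightarrow> 'v) \<Rightarrow> 'v set" where
  "derived_algebra sc br = module.span sc {br x y | x y. True}"

text \<open>Lower central series of a subalgebra K: K^1 = K, K^(n+1) = [K, K^n] (index shifted by one).\<close>
fun lower_central :: "('a::field \<Rightarrow> 'v::ab_group_add \<Rightarrow> 'v) \<Rightarrow> ('v \<Rightarrow> 'v \<Rightarrow> 'v) \<Rightarrow> 'v set \<Rightarrow> nat \<Rightarrow> 'v set" where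
  "lower_central sc br K 0 = K"
| "lower_central sc br K (Suc n) = module.span sc {br x y | x y. x \<in> K \<and> y \<in> lower_central sc br K n}"

definition nilpotent_subalg :: "('a::field \<Rightarrow> 'v::ab_group_add \<Rightarrow> 'v) \<Rightarrow> ('v \<Rightarrow> 'v \<Rightarrow> 'v) \<Rightarrow> 'v set \<Rightarrow> bool" where
  "nilpotent_subalg sc br K \<longleftrightarrow> (\<exists>n. lower_central sc br K n = {0})"

definition completely_solvable :: "('a::field \<Rightarrow> 'v::ab_group_add \<Rightarrow> 'v) \<Rightarrow> ('v \<Rightarrow> 'v \<Rightarrow> 'v) \<Rightarrow> bool" where
  "completely_solvable sc br \<longleftrightarrow> nilpotent_subalg sc br (derived_algebra sc br)"

text \<open>Frattini ideal: the largest ideal contained in the intersection of all maximal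
  subalgebras, realised as the span of all such ideals (a sum of ideals is an ideal).\<close>
definition frattini_ideal :: "('a::field \<Rightarrow> 'v::ab_group_add \<Rightarrow> 'v) \<Rightarrow> ('v \<Rightarrow> 'v \<Rightarrow> 'v) \<Rightarrow> 'v set" where
  "frattini_ideal sc br = module.span sc
     (\<Union>{I. lie_ideal sc br I \<and> I \<subseteq> \<Inter>{M. maximal_subalgebra sc br M}})"

end

theory Submission
  imports Defs
begin

text \<open>
  Let \<open>M\<close> be an abelian maximal subalgebra. If \<open>M\<close> is an ideal, then \<open>M + F x\<close> is a subalgebra
  for every \<open>x \<notin> M\<close>, so \<open>M\<close> has codimension one. Otherwise the commuting operators \<open>ad m\<close>
  (\<open>m \<in> M\<close>) have a common eigenvector \<open>x + M\<close> on \<open>L/M\<close>, since \<open>F\<close> is algebraically closed;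
  maximality gives \<open>L = M + F x\<close>, and after normalising \<open>x\<close> to \<open>y = [m\<^sub>0, x]\<close> with
  \<open>[m\<^sub>0, y] = y\<close>, the vector \<open>y\<close> is an exact eigenvector of every \<open>ad m\<close>, whence
  \<open>[L, L] = F y\<close>. Every hyperplane containing \<open>[L, L]\<close> is a maximal subalgebra, so
  \<open>\<phi>(L) \<subseteq> [L, L]\<close>, and hence \<open>\<phi>(L) \<subseteq> M \<inter> F y = 0\<close>.

  Conversely, a subalgebra of codimension one is maximal. If \<open>[L, L] = F y\<close> and
  \<open>\<phi>(L) = 0\<close>, then \<open>y\<close> is not central, since a central \<open>y \<in> [L, L]\<close> lies in every maximal
  subalgebra; hence \<open>[x, y] = y\<close> for some \<open>x\<close>, and the centraliser of \<open>x\<close> is an abelian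
  hyperplane. In both cases \<open>[L, L]\<close> is abelian, so \<open>L\<close> is completely solvable.
\<close>

section \<open>Eigenvectors modulo an invariant subspace\<close>

text \<open>\<open>poly_apply sc T p v\<close> is \<open>p(T) v\<close>, evaluated by Horner's rule.\<close>

definition poly_apply :: "('a::field \<Rightarrow> 'v::ab_group_add \<Rightarrow> 'v) \<Rightarrow> ('v \<Rightarrow> 'v) \<Rightarrow> 'a poly \<Rightarrow> 'v \<Rightarrow> 'v"
  where "poly_apply sc T p v = fold_coeffs (\<lambda>a w. sc a v + T w) p 0"

lemma poly_apply_0 [simp]: "poly_apply sc T 0 v = 0"
  by (simp add: poly_apply_def)

context vector_space
begin

context
  fixes T :: "'b \<Rightarrow> 'b"
  assumes T: "Vector_Spaces.linear scale scale T"
begin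

interpretation T: Vector_Spaces.linear scale scale T by (rule T)

lemma poly_apply_pCons: "poly_apply scale T (pCons a p) v = a *s v + T (poly_apply scale T p v)"
  by (cases "p = 0 \<and> a = 0") (auto simp: poly_apply_def)

lemma poly_apply_add: "poly_apply scale T (p + q) v = poly_apply scale T p v + poly_apply scale T q v"
  by (induction p q rule: poly_induct2)
    (simp_all add: poly_apply_pCons T.add algebra_simps)

lemma poly_apply_smult: "poly_apply scale T (smult c p) v = c *s poly_apply scale T p v"
  by (induction p) (simp_all add: poly_apply_pCons T.scale scale_right_distrib)

lemma poly_apply_mult: "poly_apply scale T (p * q) v = poly_apply scale T p (poly_apply scale T q v)"
  by (induction p) (simp_all add: poly_apply_pCons poly_apply_add poly_apply_smult)

lemma poly_apply_monom: "poly_apply scale T (monom c n) v = c *s (T ^^ n) v"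
  by (induction n) (simp_all add: monom_0 monom_Suc poly_apply_pCons T.scale)

lemma poly_apply_diff: "poly_apply scale T (p - q) v = poly_apply scale T p v - poly_apply scale T q v"
  using poly_apply_add[of p "smult (-1) q"] poly_apply_smult[of "-1" q] by simp

lemma poly_apply_const: "poly_apply scale T [:a:] v = a *s v"
  by (simp add: poly_apply_pCons)

lemma poly_apply_linear_factor: "poly_apply scale T [:-c, 1:] v = T v - c *s v"
  by (simp add: poly_apply_pCons)

lemma poly_apply_in_invariant_subspace:
  "subspace U \<Longrightarrow> (\<And>x. x \<in> U \<Longrightarrow> T x \<in> U) \<Longrightarrow> v \<in> U \<Longrightarrow> poly_apply scale T p v \<in> U"
  by (induction p) (simp_all add: poly_apply_pCons subspace_0 subspace_add subspace_scale)

end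

end

lemma (in vector_space) eigenvector_modulo_of_annihilating_poly:
  assumes "alg_closed_field TYPE('a)" and T: "Vector_Spaces.linear scale scale T"
    and M: "subspace M" and U: "subspace U" and TU: "\<And>x. x \<in> U \<Longrightarrow> T x \<in> U"
    and v: "v \<in> U" "v \<notin> M"
  shows "q \<noteq> 0 \<Longrightarrow> poly_apply scale T q v \<in> M \<Longrightarrow> \<exists>w\<in>U. w \<notin> M \<and> (\<exists>c. T w - c *s w \<in> M)"
  \<comment> \<open>Split off a linear factor of \<open>q\<close>: either the cofactor already maps \<open>v\<close> into \<open>M\<close>,
    or its image of \<open>v\<close> is the eigenvector sought.\<close>
proof (induction "degree q" arbitrary: q rule: less_induct)
  case less
  show ?case
  proof (cases "degree q = 0")
    case True
    then obtain a where "q = [:a:]" and "a \<noteq> 0"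
      using less.prems by (metis degree_eq_zeroE pCons_0_0)
    then have "a *s v \<in> M"
      using less.prems(2) by (simp add: poly_apply_const[OF T])
    then have "inverse a *s (a *s v) \<in> M"
      by (rule subspace_scale[OF M])
    with \<open>a \<noteq> 0\<close> v show ?thesis by simp
  next
    case False
    then obtain c where "poly q c = 0"
      using assms(1) unfolding alg_closed_field_def by blast
    then obtain r where qr: "q = [:-c, 1:] * r"
      by (metis dvdE poly_eq_0_iff_dvd)
    with less.prems have "r \<noteq> 0" by auto
    then have "degree r < degree q"
      unfolding qr by (subst degree_mult_eq) auto
    define w where "w = poly_apply scale T r v"
    have "w \<in> U"
      unfolding w_def by (rule poly_apply_in_invariant_subspace[OF T U TU v(1)])
    moreover have "T w - c *s w \<in> M"
      using less.prems(2) unfolding qr w_def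
      by (simp only: poly_apply_mult[OF T] poly_apply_linear_factor[OF T])
    ultimately show ?thesis
      using less.hyps[OF \<open>degree r < degree q\<close> \<open>r \<noteq> 0\<close>] w_def by blast
  qed
qed

lemma (in finite_dimensional_vector_space) exists_annihilating_poly_modulo:
  assumes T: "Vector_Spaces.linear scale scale T" and M: "subspace M"
  shows "\<exists>q. q \<noteq> 0 \<and> poly_apply scale T q v \<in> M"
proof -
  define G where "G k = (\<lambda>i. (T ^^ i) v) ` {..<k}" for k
  have G_Suc: "M \<union> G (Suc k) = insert ((T ^^ k) v) (M \<union> G k)" for k
    by (auto simp: G_def lessThan_Suc)
  have "\<exists>k. (T ^^ k) v \<in> span (M \<union> G k)"
  proof (rule ccontr)
    assume "\<nexists>k. (T ^^ k) v \<in> span (M \<union> G k)"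
    then have "dim (M \<union> G k) = dim M + k" for k
      by (induction k) (simp_all add: G_def [of 0] G_Suc dim_insert)
    from this[of "Suc dimension"] show False
      using dim_subset_UNIV[of "M \<union> G (Suc dimension)"] by simp
  qed
  then obtain k where k: "(T ^^ k) v \<in> span (M \<union> G k)" ..
  have "\<exists>m p. m \<in> M \<and> (\<forall>i\<ge>j. coeff p i = 0) \<and> x = m + poly_apply scale T p v"
    if "x \<in> span (M \<union> G j)" for x j
    using that
  proof (induction j arbitrary: x)
    case 0
    then have "x = x + poly_apply scale T 0 v" "x \<in> M"
      using M by (simp_all add: G_def span_eq_iff[THEN iffD2, OF M])
    then show ?case by (metis coeff_0)
  next
    case (Suc j)
    then obtain c where "x - c *s (T ^^ j) v \<in> span (M \<union> G j)"
      by (auto simp: G_Suc span_breakdown_eq)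
    then obtain m p where "m \<in> M" "\<forall>i\<ge>j. coeff p i = 0"
      and "x - c *s (T ^^ j) v = m + poly_apply scale T p v"
      using Suc.IH by blast
    then show ?case
      by (intro exI[of _ m] exI[of _ "p + monom c j"])
        (auto simp: poly_apply_add[OF T] poly_apply_monom[OF T] algebra_simps)
  qed
  then obtain m p where "m \<in> M" "coeff p k = 0" "(T ^^ k) v = m + poly_apply scale T p v"
    using k by blast
  then have "coeff (monom 1 k - p) k = 1" "poly_apply scale T (monom 1 k - p) v = m"
    by (simp_all add: poly_apply_diff[OF T] poly_apply_monom[OF T])
  then show ?thesis
    using \<open>m \<in> M\<close> by (metis one_neq_zero coeff_0)
qed

lemma (in finite_dimensional_vector_space) eigenvector_modulo_subspace:
  assumes "alg_closed_field TYPE('a)" and T: "Vector_Spaces.linear scale scale T"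
    and "subspace M" "subspace U" "\<not> U \<subseteq> M" "\<And>x. x \<in> U \<Longrightarrow> T x \<in> U"
  shows "\<exists>w\<in>U. w \<notin> M \<and> (\<exists>c. T w - c *s w \<in> M)"
proof -
  obtain v where "v \<in> U" "v \<notin> M" using assms(5) by blast
  with assms show ?thesis
    using exists_annihilating_poly_modulo[OF T \<open>subspace M\<close>]
      eigenvector_modulo_of_annihilating_poly by metis
qed

section \<open>Maximal subalgebras, the derived algebra and the Frattini ideal\<close>

lemma (in vector_space) in_span_insert_subspace_iff:
  "subspace M \<Longrightarrow> x \<in> span (insert z M) \<longleftrightarrow> (\<exists>k. x - k *s z \<in> M)"
  by (metis span_breakdown_eq span_eq_iff)

lemma (in vector_space) dim_eq_1_imp_span_singleton:
  assumes "subspace D" "dim D = 1"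
  obtains y where "y \<noteq> 0" "D = span {y}"
proof -
  obtain B where B: "B \<subseteq> D" "independent B" "D \<subseteq> span B" "card B = dim D"
    by (rule basis_exists)
  then obtain y where "B = {y}"
    using assms(2) card_1_singletonE by metis
  moreover have "span B \<subseteq> D"
    using B(1) assms(1) by (rule span_minimal)
  ultimately show ?thesis
    using that B(2,3) dependent_single by blast
qed

locale lie_alg = vector_space scale
  for scale :: "'a::field \<Rightarrow> 'v::ab_group_add \<Rightarrow> 'v" (infixr \<open>*s\<close> 75) +
  fixes br :: "'v \<Rightarrow> 'v \<Rightarrow> 'v"
  assumes lie_algebra: "lie_algebra scale br"
begin

lemma linear_br: "Vector_Spaces.linear scale scale (br x)"
  using lie_algebra by (simp add: lie_algebra_def)

lemma br_add_right: "br x (y + z) = br x y + br x z"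
  and br_scale_right: "br x (c *s y) = c *s br x y"
  using linear_br[of x] by (simp_all add: Vector_Spaces.linear_iff)

lemma br_add_left: "br (x + y) z = br x z + br y z"
  and br_scale_left: "br (c *s x) z = c *s br x z"
  using lie_algebra by (simp_all add: lie_algebra_def Vector_Spaces.linear_iff)

lemma br_self: "br x x = 0"
  using lie_algebra by (simp add: lie_algebra_def)

lemma jacobi: "br x (br y z) + br y (br z x) + br z (br x y) = 0"
  using lie_algebra by (simp add: lie_algebra_def)

lemma br_0_right [simp]: "br x 0 = 0"
  using br_scale_right[of x 0 0] by simp

lemma br_0_left [simp]: "br 0 x = 0"
  using br_scale_left[of 0 0 x] by simp

lemma br_minus_right: "br x (- y) = - br x y"
  using br_scale_right[of x "-1" y] by simp

lemma br_diff_right: "br x (y - z) = br x y - br x z"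
  using br_add_right[of x y "- z"] by (simp add: br_minus_right)

lemma br_anticomm: "br y x = - br x y"
  using br_self[of "x + y"]
  by (simp add: br_add_left br_add_right br_self[of x] br_self[of y] eq_neg_iff_add_eq_0)

lemma br_derivation: "br x (br y z) = br (br x y) z + br y (br x z)"
proof -
  have "br y (br z x) = - br y (br x z)"
    by (metis br_anticomm br_minus_right)
  moreover have "br z (br x y) = - br (br x y) z"
    by (rule br_anticomm)
  ultimately have "br x (br y z) + - br y (br x z) + - br (br x y) z = 0"
    using jacobi[of x y z] by simp
  then show ?thesis
    by (simp add: algebra_simps)
qed

lemma br_scale_add_scale_add:
  "br (k *s x + a) (l *s x + b) = k *s br x b - l *s br x a + br a b"
  by (simp add: br_add_left br_add_right br_scale_left br_scale_right br_self
      br_anticomm[of a x] algebra_simps)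

lemma br_in_subspace_of_span_insert:
  assumes M: "subspace M" and S: "subspace S"
    and xM: "\<And>m. m \<in> M \<Longrightarrow> br x m \<in> S" and MM: "\<And>m m'. m \<in> M \<Longrightarrow> m' \<in> M \<Longrightarrow> br m m' \<in> S"
    and a: "a \<in> span (insert x M)" and b: "b \<in> span (insert x M)"
  shows "br a b \<in> S"
proof -
  obtain k l where a': "a - k *s x \<in> M" and b': "b - l *s x \<in> M"
    using a b M by (auto simp: in_span_insert_subspace_iff)
  have "br a b = br (k *s x + (a - k *s x)) (l *s x + (b - l *s x))"
    by simp
  also have "\<dots> = k *s br x (b - l *s x) - l *s br x (a - k *s x) + br (a - k *s x) (b - l *s x)"
    by (rule br_scale_add_scale_add)
  finally show ?thesis
    using S xM[OF a'] xM[OF b'] MM[OF a' b'] by (simp add: subspace_add subspace_diff subspace_scale)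
qed

lemma lie_subalgebra_if_ideal: "lie_ideal scale br I \<Longrightarrow> lie_subalgebra scale br I"
  by (simp add: lie_ideal_def lie_subalgebra_def)

lemma maximal_subalgebra_if_hyperplane:
  assumes H: "lie_subalgebra scale br H" and z: "z \<notin> H" and UNIV: "span (insert z H) = UNIV"
  shows "maximal_subalgebra scale br H"
  unfolding maximal_subalgebra_def
proof (intro conjI allI impI)
  fix N assume N: "lie_subalgebra scale br N \<and> H \<subseteq> N"
  then have "subspace N" "subspace H" using H by (simp_all add: lie_subalgebra_def)
  show "N = H \<or> N = UNIV"
  proof (cases "N \<subseteq> H")
    case False
    then obtain n where n: "n \<in> N" "n \<notin> H" by blast
    obtain k where k: "n - k *s z \<in> H"
      using UNIV \<open>subspace H\<close> in_span_insert_subspace_iff by blast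
    with n have "k \<noteq> 0" by auto
    have "inverse k *s (n - (n - k *s z)) \<in> N"
      using n k N \<open>subspace N\<close> by (blast intro: subspace_scale subspace_diff)
    with \<open>k \<noteq> 0\<close> have "insert z H \<subseteq> N" using N by auto
    then have "span (insert z H) \<subseteq> N" using \<open>subspace N\<close> by (rule span_minimal)
    then show ?thesis using UNIV by auto
  qed (use N in blast)
qed (use assms in auto)

lemma span_insert_eq_UNIV_if_maximal:
  assumes M: "maximal_subalgebra scale br M" and x: "x \<notin> M"
    and xM: "\<And>m. m \<in> M \<Longrightarrow> br x m \<in> span (insert x M)"
  shows "span (insert x M) = UNIV"
proof -
  have "subspace M" and MM: "\<And>m m'. m \<in> M \<Longrightarrow> m' \<in> M \<Longrightarrow> br m m' \<in> M"
    using M by (auto simp: maximal_subalgebra_def lie_subalgebra_def)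
  have "lie_subalgebra scale br (span (insert x M))"
    unfolding lie_subalgebra_def
    using br_in_subspace_of_span_insert[OF \<open>subspace M\<close> subspace_span xM] MM span_superset by blast
  moreover have "M \<subseteq> span (insert x M)" "x \<in> span (insert x M)"
    by (auto intro: span_base)
  ultimately show ?thesis
    using M x unfolding maximal_subalgebra_def by blast
qed

lemma subspace_derived_algebra: "subspace (derived_algebra scale br)"
  by (simp add: derived_algebra_def)

lemma br_in_derived_algebra: "br a b \<in> derived_algebra scale br"
  unfolding derived_algebra_def by (rule span_base) blast

lemma derived_algebra_subset:
  "subspace S \<Longrightarrow> (\<And>a b. br a b \<in> S) \<Longrightarrow> derived_algebra scale br \<subseteq> S"
  unfolding derived_algebra_def by (rule span_minimal) auto

lemma lie_ideal_if_derived_algebra_subset: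
  "subspace S \<Longrightarrow> derived_algebra scale br \<subseteq> S \<Longrightarrow> lie_ideal scale br S"
  using br_in_derived_algebra by (auto simp: lie_ideal_def)

text \<open>Every subspace containing the derived algebra is an ideal; take a hyperplane through the
  derived algebra that avoids \<open>z\<close>.\<close>

lemma exists_maximal_subalgebra_not_containing:
  assumes "z \<notin> derived_algebra scale br"
  shows "\<exists>H. maximal_subalgebra scale br H \<and> z \<notin> H"
proof -
  obtain B where B: "B \<subseteq> derived_algebra scale br" "independent B" "derived_algebra scale br \<subseteq> span B"
    by (rule maximal_independent_subset)
  have "span B \<subseteq> derived_algebra scale br"
    using B(1) subspace_derived_algebra by (rule span_minimal)
  with assms have "z \<notin> span B" by blast
  then have indep: "independent (insert z B)" using B(2) by (rule independent_insertI)
  define E where "E = extend_basis (insert z B)"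
  define H where "H = span (E - {z})"
  have "insert z B \<subseteq> E" "independent E" "span E = UNIV"
    unfolding E_def using extend_basis_superset[OF indep] independent_extend_basis[OF indep]
      span_extend_basis[OF indep] by simp_all
  have "z \<notin> H"
    using \<open>independent E\<close> \<open>insert z B \<subseteq> E\<close> unfolding H_def by (metis dependent_def insert_subset)
  have "B \<subseteq> E - {z}"
    using \<open>insert z B \<subseteq> E\<close> \<open>z \<notin> span B\<close> span_superset[of B] by blast
  then have "derived_algebra scale br \<subseteq> H"
    using B(3) span_mono unfolding H_def by blast
  then have "lie_subalgebra scale br H"
    by (simp add: H_def lie_ideal_if_derived_algebra_subset lie_subalgebra_if_ideal)
  moreover have "E \<subseteq> insert z H"
    using span_superset[of "E - {z}"] unfolding H_def by blast
  then have "span (insert z H) = UNIV"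
    using \<open>span E = UNIV\<close> span_mono[of E "insert z H"] by auto
  ultimately show ?thesis
    using \<open>z \<notin> H\<close> maximal_subalgebra_if_hyperplane by blast
qed

lemma frattini_ideal_subset_maximal:
  assumes "maximal_subalgebra scale br M"
  shows "frattini_ideal scale br \<subseteq> M"
proof -
  have "subspace M"
    using assms by (simp add: maximal_subalgebra_def lie_subalgebra_def)
  then show ?thesis
    unfolding frattini_ideal_def using assms by (intro span_minimal) auto
qed

lemma frattini_ideal_subset_derived_algebra:
  "frattini_ideal scale br \<subseteq> derived_algebra scale br"
proof
  fix z assume "z \<in> frattini_ideal scale br"
  then show "z \<in> derived_algebra scale br"
    using exists_maximal_subalgebra_not_containing frattini_ideal_subset_maximal by blast
qed

lemma ideal_subset_frattini_ideal:
  assumes "lie_ideal scale br I" "\<And>M. maximal_subalgebra scale br M \<Longrightarrow> I \<subseteq> M"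
  shows "I \<subseteq> frattini_ideal scale br"
proof -
  have "I \<subseteq> \<Inter>{M. maximal_subalgebra scale br M}"
    using assms(2) by blast
  with assms(1) have "I \<subseteq> \<Union>{I. lie_ideal scale br I \<and> I \<subseteq> \<Inter>{M. maximal_subalgebra scale br M}}"
    by blast
  then show ?thesis
    unfolding frattini_ideal_def using span_superset by (rule order_trans)
qed

lemma abelian_span_singleton: "abelian_set br (span {y})"
  by (auto simp: abelian_set_def span_singleton br_scale_left br_scale_right br_self)

lemma completely_solvable_if_abelian_derived_algebra:
  assumes "abelian_set br (derived_algebra scale br)"
  shows "completely_solvable scale br"
proof -
  let ?D = "derived_algebra scale br"
  have "{br x y |x y. x \<in> ?D \<and> y \<in> ?D} = {0}"
    using assms span_zero[of "{br x y |x y. True}"]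
    unfolding abelian_set_def derived_algebra_def by (auto intro!: exI[of _ 0])
  then have "lower_central scale br ?D 1 = {0}"
    by simp
  then show ?thesis
    unfolding completely_solvable_def nilpotent_subalg_def by blast
qed

lemma completely_solvable_if_dim_derived_algebra_eq_1:
  assumes "dim (derived_algebra scale br) = 1"
  shows "completely_solvable scale br"
  using dim_eq_1_imp_span_singleton[OF subspace_derived_algebra assms]
  by (metis abelian_span_singleton completely_solvable_if_abelian_derived_algebra)

lemma central_derived_element_in_maximal:
  assumes y: "y \<in> derived_algebra scale br" and central: "\<And>a. br a y = 0"
    and M: "maximal_subalgebra scale br M"
  shows "y \<in> M"
proof (rule ccontr)
  assume "y \<notin> M"
  have "subspace M" and MM: "\<And>m m'. m \<in> M \<Longrightarrow> m' \<in> M \<Longrightarrow> br m m' \<in> M"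
    using M by (auto simp: maximal_subalgebra_def lie_subalgebra_def)
  have yM: "br y m = 0" for m
    using central br_anticomm[of m y] by simp
  then have "span (insert y M) = UNIV"
    using span_insert_eq_UNIV_if_maximal[OF M \<open>y \<notin> M\<close>] span_zero by simp
  then have "br a b \<in> M" for a b
    using br_in_subspace_of_span_insert[OF \<open>subspace M\<close> \<open>subspace M\<close>, where x = y, OF _ MM]
      yM subspace_0[OF \<open>subspace M\<close>] by simp
  then have "derived_algebra scale br \<subseteq> M"
    using derived_algebra_subset[OF \<open>subspace M\<close>] by blast
  with y \<open>y \<notin> M\<close> show False by blast
qed

lemma maximal_abelian_centralizer:
  assumes D: "derived_algebra scale br = span {y}" and "y \<noteq> 0" and xy: "br x y = y"
  shows "maximal_subalgebra scale br {z. br x z = 0}" and "abelian_set br {z. br x z = 0}"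
proof -
  let ?C = "{z. br x z = 0}"
  have line: "\<exists>c. br a b = c *s y" for a b
    using br_in_derived_algebra[of a b] by (auto simp: D span_singleton)
  have abelian: "br z z' = 0" if "z \<in> ?C" "z' \<in> ?C" for z z'
  proof -
    obtain c where c: "br z z' = c *s y" using line by blast
    have "br x (br z z') = 0"
      using that br_derivation[of x z z'] by simp
    then show ?thesis using c xy by (simp add: br_scale_right)
  qed
  then show "abelian_set br ?C"
    by (simp add: abelian_set_def)
  have "subspace ?C"
    by (rule subspaceI) (simp_all add: br_add_right br_scale_right)
  moreover have "br a b \<in> ?C" if "a \<in> ?C" "b \<in> ?C" for a b
    using abelian[OF that] by simp
  ultimately have "lie_subalgebra scale br ?C"
    unfolding lie_subalgebra_def by blast
  moreover have "y \<notin> ?C"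
    using xy \<open>y \<noteq> 0\<close> by simp
  moreover have "t \<in> span (insert y ?C)" for t
  proof -
    obtain c where "br x t = c *s y" using line by blast
    then have "t - c *s y \<in> ?C"
      using xy by (simp add: br_diff_right br_scale_right)
    then show ?thesis
      using \<open>subspace ?C\<close> in_span_insert_subspace_iff by blast
  qed
  ultimately show "maximal_subalgebra scale br ?C"
    using maximal_subalgebra_if_hyperplane by blast
qed

lemma exists_maximal_abelian_if_dim_derived_algebra_eq_1:
  assumes "dim (derived_algebra scale br) = 1" and "frattini_ideal scale br = {0}"
  shows "\<exists>M. maximal_subalgebra scale br M \<and> abelian_set br M"
proof -
  obtain y where "y \<noteq> 0" and D: "derived_algebra scale br = span {y}"
    using dim_eq_1_imp_span_singleton[OF subspace_derived_algebra assms(1)] by blast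
  show ?thesis
  proof (cases "\<forall>a. br a y = 0")
    case True
    then have "br a z = 0" if "z \<in> span {y}" for a z
      using that by (auto simp: span_singleton br_scale_right)
    then have "lie_ideal scale br (span {y})"
      by (simp add: lie_ideal_def span_zero)
    moreover have "span {y} \<subseteq> M" if M: "maximal_subalgebra scale br M" for M
    proof -
      have "y \<in> M"
        using central_derived_element_in_maximal[OF _ _ M] True D span_base[of y "{y}"] by simp
      moreover have "subspace M"
        using M by (simp add: maximal_subalgebra_def lie_subalgebra_def)
      ultimately show ?thesis
        by (simp add: span_minimal)
    qed
    ultimately have "span {y} \<subseteq> frattini_ideal scale br"
      by (rule ideal_subset_frattini_ideal)
    with \<open>y \<noteq> 0\<close> assms(2) show ?thesis
      using span_base[of y "{y}"] by auto
  next
    case False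
    then obtain a where "br a y \<noteq> 0" by blast
    moreover obtain c where "br a y = c *s y"
      using br_in_derived_algebra[of a y] by (auto simp: D span_singleton)
    ultimately have "c \<noteq> 0" and "br (inverse c *s a) y = y"
      by (auto simp: br_scale_left)
    then show ?thesis
      using maximal_abelian_centralizer[OF D \<open>y \<noteq> 0\<close>] by blast
  qed
qed

end

section \<open>Finite-dimensional Lie algebras\<close>

locale finite_dimensional_lie_alg =
  lie_alg scale br + finite_dimensional_vector_space scale Basis
  for scale :: "'a::field \<Rightarrow> 'v::ab_group_add \<Rightarrow> 'v" (infixr \<open>*s\<close> 75)
    and br :: "'v \<Rightarrow> 'v \<Rightarrow> 'v" and Basis :: "'v set"
begin

lemma span_insert_eq_UNIV_iff_codim_1:
  assumes "subspace M" "x \<notin> M"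
  shows "span (insert x M) = UNIV \<longleftrightarrow> dim M + 1 = dim (UNIV :: 'v set)"
proof -
  have "dim (insert x M) = dim M + 1"
    using assms by (simp add: dim_insert span_eq_iff[THEN iffD2, OF assms(1)])
  then show ?thesis
    by (simp add: dim_eq_full[symmetric] dimension_def)
qed

lemma maximal_subalgebra_if_codim_1:
  assumes "lie_subalgebra scale br H" "dim H + 1 = dim (UNIV :: 'v set)"
  shows "maximal_subalgebra scale br H"
proof -
  have "subspace H" using assms(1) by (simp add: lie_subalgebra_def)
  from assms(2) have "H \<noteq> UNIV" by (metis n_not_Suc_n Suc_eq_plus1)
  then obtain x where "x \<notin> H" by blast
  then show ?thesis
    using assms maximal_subalgebra_if_hyperplane span_insert_eq_UNIV_iff_codim_1[OF \<open>subspace H\<close>]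
    by blast
qed

lemma derived_algebra_subset_codim_1_ideal:
  assumes I: "lie_ideal scale br I" and codim: "dim I + 1 = dim (UNIV :: 'v set)"
  shows "derived_algebra scale br \<subseteq> I"
proof -
  have "subspace I" and brI: "\<And>a y. y \<in> I \<Longrightarrow> br a y \<in> I"
    using I by (auto simp: lie_ideal_def)
  from codim have "I \<noteq> UNIV" by (metis n_not_Suc_n Suc_eq_plus1)
  then obtain x where "x \<notin> I" by blast
  then have "span (insert x I) = UNIV"
    using codim span_insert_eq_UNIV_iff_codim_1[OF \<open>subspace I\<close>] by blast
  then have "br a b \<in> I" for a b
    using br_in_subspace_of_span_insert[OF \<open>subspace I\<close> \<open>subspace I\<close>, of x] brI by blast
  then show ?thesis
    using derived_algebra_subset[OF \<open>subspace I\<close>] by blast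
qed

lemma codim_1_if_maximal_ideal:
  assumes M: "maximal_subalgebra scale br M" and "lie_ideal scale br M"
  shows "dim M + 1 = dim (UNIV :: 'v set)"
proof -
  have "subspace M"
    using assms(2) by (simp add: lie_ideal_def)
  from M obtain x where "x \<notin> M"
    by (auto simp: maximal_subalgebra_def)
  moreover have "br x m \<in> span (insert x M)" if "m \<in> M" for m
    using assms(2) that span_superset[of "insert x M"] by (auto simp: lie_ideal_def)
  ultimately show ?thesis
    using span_insert_eq_UNIV_if_maximal[OF M] span_insert_eq_UNIV_iff_codim_1[OF \<open>subspace M\<close>]
    by blast
qed

lemma eigenspace_modulo_abelian:
  fixes c :: 'a
  assumes M: "subspace M" "abelian_set br M" "m \<in> M"
    and U: "subspace U" "M \<subseteq> U" "\<And>m u. m \<in> M \<Longrightarrow> u \<in> U \<Longrightarrow> br m u \<in> U"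
  defines "E \<equiv> {u \<in> U. br m u - c *s u \<in> M}"
  shows "subspace E" and "M \<subseteq> E" and "\<And>m' u. m' \<in> M \<Longrightarrow> u \<in> E \<Longrightarrow> br m' u \<in> E"
proof -
  have MM: "br a b = 0" if "a \<in> M" "b \<in> M" for a b
    using M(2) that by (simp add: abelian_set_def)
  show "subspace E"
  proof (rule subspaceI)
    fix x y d assume "x \<in> E" "y \<in> E"
    moreover have "br m (x + y) - c *s (x + y) = (br m x - c *s x) + (br m y - c *s y)"
      and "br m (d *s x) - c *s (d *s x) = d *s (br m x - c *s x)"
      by (simp_all add: br_add_right br_scale_right scale_right_distrib scale_right_diff_distrib
          algebra_simps)
    ultimately show "x + y \<in> E" "d *s x \<in> E"
      using U(1) M(1) by (simp_all add: E_def subspace_add subspace_scale)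
  qed (use U(1) M(1) in \<open>simp add: E_def subspace_0\<close>)
  show "M \<subseteq> E"
    using U(2) M(1) MM[OF M(3)] by (auto simp: E_def subspace_neg subspace_scale)
  fix m' u assume "m' \<in> M" "u \<in> E"
  have "br m (br m' u) - c *s br m' u = br m' (br m u - c *s u)"
    using br_derivation[of m m' u] MM[OF M(3) \<open>m' \<in> M\<close>] by (simp add: br_diff_right br_scale_right)
  also have "\<dots> = 0"
    using MM \<open>m' \<in> M\<close> \<open>u \<in> E\<close> by (simp add: E_def)
  finally show "br m' u \<in> E"
    using U(3) \<open>m' \<in> M\<close> \<open>u \<in> E\<close> M(1) by (simp add: E_def subspace_0)
qed

text \<open>If some \<open>m \<in> M\<close> does not act as a scalar modulo \<open>M\<close>, pass to its eigenspace modulo \<open>M\<close>: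
  it is smaller than \<open>U\<close>, still contains \<open>M\<close> properly, and is \<open>M\<close>-invariant because \<open>M\<close> is abelian.\<close>

lemma abelian_common_eigenvector_modulo:
  assumes alg: "alg_closed_field TYPE('a)" and M: "subspace M" "abelian_set br M"
  shows "subspace U \<Longrightarrow> M \<subset> U \<Longrightarrow> (\<And>m u. m \<in> M \<Longrightarrow> u \<in> U \<Longrightarrow> br m u \<in> U) \<Longrightarrow>
    \<exists>w\<in>U. w \<notin> M \<and> (\<forall>m\<in>M. \<exists>c. br m w - c *s w \<in> M)"
proof (induction "dim U" arbitrary: U rule: less_induct)
  case less
  show ?case
  proof (cases "\<forall>m\<in>M. \<exists>c. \<forall>u\<in>U. br m u - c *s u \<in> M")
    case True
    with less.prems(2) show ?thesis by blast
  next
    case False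
    then obtain m where m: "m \<in> M" and not_eigen: "\<forall>c. \<exists>u\<in>U. br m u - c *s u \<notin> M"
      by blast
    obtain w c where w: "w \<in> U" "w \<notin> M" "br m w - c *s w \<in> M"
      using eigenvector_modulo_subspace[OF alg linear_br M(1) less.prems(1)] less.prems m by blast
    define E where "E = {u \<in> U. br m u - c *s u \<in> M}"
    note E = eigenspace_modulo_abelian[where c = c, OF M m less.prems(1)
        psubset_imp_subset[OF less.prems(2)] less.prems(3), folded E_def]
    have "E \<subset> U"
      using not_eigen by (auto simp: E_def)
    then have "dim E < dim U"
      using dim_psubset E(1) less.prems(1) by (metis span_eq_iff)
    moreover have "M \<subset> E"
      using E(2) w by (auto simp: E_def)
    ultimately obtain w' where "w' \<in> E" "w' \<notin> M" "\<forall>m\<in>M. \<exists>c. br m w' - c *s w' \<in> M"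
      using less.hyps E(1,3) by blast
    then show ?thesis
      by (auto simp: E_def)
  qed
qed

lemma maximal_abelian_non_ideal_normal_form:
  assumes alg: "alg_closed_field TYPE('a)" and M: "maximal_subalgebra scale br M"
    and ab: "abelian_set br M" and non_ideal: "\<not> lie_ideal scale br M"
  obtains y m0 where "m0 \<in> M" "y \<notin> M" "span (insert y M) = UNIV" "br m0 y = y"
    and "\<And>m. m \<in> M \<Longrightarrow> \<exists>c. br m y = c *s y"
proof -
  have "subspace M" "M \<noteq> UNIV"
    using M by (auto simp: maximal_subalgebra_def lie_subalgebra_def)
  have MM: "br a b = 0" if "a \<in> M" "b \<in> M" for a b
    using ab that by (simp add: abelian_set_def)
  obtain x where x: "x \<notin> M" and eigen: "\<And>m. m \<in> M \<Longrightarrow> \<exists>c. br m x - c *s x \<in> M"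
    using abelian_common_eigenvector_modulo[OF alg \<open>subspace M\<close> ab subspace_UNIV] \<open>M \<noteq> UNIV\<close>
    by blast
  have "br x m \<in> span (insert x M)" if "m \<in> M" for m
  proof -
    obtain c where "br m x - c *s x \<in> M" using eigen \<open>m \<in> M\<close> by blast
    then have "br m x \<in> span (insert x M)"
      using \<open>subspace M\<close> in_span_insert_subspace_iff by fastforce
    then show ?thesis by (metis br_anticomm span_neg)
  qed
  with x have L: "span (insert x M) = UNIV"
    by (rule span_insert_eq_UNIV_if_maximal[OF M])
  from non_ideal obtain z y where y: "y \<in> M" and zy: "br z y \<notin> M"
    using \<open>subspace M\<close> by (auto simp: lie_ideal_def)
  have "br y x \<notin> M"
  proof
    assume "br y x \<in> M"
    obtain k where "z - k *s x \<in> M"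
      using L \<open>subspace M\<close> in_span_insert_subspace_iff by blast
    have "br z y = br (k *s x) y + br (z - k *s x) y"
      using br_add_left[of "k *s x" "z - k *s x" y] by simp
    also have "\<dots> = - (k *s br y x)"
      using MM[OF \<open>z - k *s x \<in> M\<close> y] by (simp add: br_scale_left br_anticomm[of y x])
    finally show False
      using zy \<open>br y x \<in> M\<close> \<open>subspace M\<close> by (simp add: subspace_neg subspace_scale)
  qed
  obtain c where c: "br y x - c *s x \<in> M"
    using eigen y by blast
  with \<open>br y x \<notin> M\<close> have "c \<noteq> 0" by auto
  \<comment> \<open>\<open>m0\<close> has eigenvalue \<open>1\<close> on \<open>x\<close> modulo \<open>M\<close>; \<open>[m0, x] \<equiv> x\<close> is then an exact eigenvector.\<close>
  define m0 where "m0 = inverse c *s y"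
  define u where "u = br m0 x - x"
  have "m0 \<in> M" using y \<open>subspace M\<close> by (simp add: m0_def subspace_scale)
  have "u = inverse c *s (br y x - c *s x)"
    using \<open>c \<noteq> 0\<close> by (simp add: u_def m0_def br_scale_left scale_right_diff_distrib)
  then have "u \<in> M" using c \<open>subspace M\<close> by (simp add: subspace_scale)
  show ?thesis
  proof
    show "m0 \<in> M" by fact
    show "br m0 x \<notin> M"
      using x \<open>u \<in> M\<close> \<open>subspace M\<close> subspace_diff[of M "br m0 x" u] by (auto simp: u_def)
    show "span (insert (br m0 x) M) = UNIV"
    proof -
      have "t - k *s br m0 x \<in> M" if "t - k *s x \<in> M" for t k
      proof -
        have "t - k *s br m0 x = (t - k *s x) - k *s u"
          by (simp add: u_def scale_right_diff_distrib)
        then show ?thesis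
          using subspace_diff[OF \<open>subspace M\<close> that subspace_scale[OF \<open>subspace M\<close> \<open>u \<in> M\<close>]]
          by metis
      qed
      then show ?thesis
        using L \<open>subspace M\<close> in_span_insert_subspace_iff by blast
    qed
    show "br m0 (br m0 x) = br m0 x"
      using MM[OF \<open>m0 \<in> M\<close> \<open>u \<in> M\<close>] by (simp add: u_def br_diff_right br_self eq_diff_eq)
    fix m assume "m \<in> M"
    then obtain d where d: "br m x - d *s x \<in> M"
      using eigen by blast
    have "br m (br m0 x) = br m0 (br m x)"
      using br_derivation[of m m0 x] MM[OF \<open>m \<in> M\<close> \<open>m0 \<in> M\<close>] by simp
    also have "\<dots> = d *s br m0 x + br m0 (br m x - d *s x)"
      by (simp add: br_diff_right br_scale_right)
    also have "\<dots> = d *s br m0 x"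
      using MM[OF \<open>m0 \<in> M\<close> d] by simp
    finally show "\<exists>c. br m (br m0 x) = c *s br m0 x" ..
  qed
qed

lemma derived_algebra_and_frattini_if_maximal_abelian_non_ideal:
  assumes alg: "alg_closed_field TYPE('a)" and M: "maximal_subalgebra scale br M"
    and ab: "abelian_set br M" and non_ideal: "\<not> lie_ideal scale br M"
  shows "dim (derived_algebra scale br) = 1" and "frattini_ideal scale br = {0}"
proof -
  obtain y m0 where "m0 \<in> M" "y \<notin> M" and L: "span (insert y M) = UNIV" and "br m0 y = y"
    and eigen: "\<And>m. m \<in> M \<Longrightarrow> \<exists>c. br m y = c *s y"
    using maximal_abelian_non_ideal_normal_form[OF assms] by metis
  have "subspace M"
    using M by (simp add: maximal_subalgebra_def lie_subalgebra_def)
  have "br y m \<in> span {y}" if m: "m \<in> M" for m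
  proof -
    obtain c where "br m y = c *s y" using eigen[OF m] by blast
    then have "br y m = (- c) *s y"
      by (metis br_anticomm scale_minus_left)
    then show ?thesis by (metis span_base singletonI span_scale)
  qed
  moreover have "br m m' \<in> span {y}" if "m \<in> M" "m' \<in> M" for m m'
    using ab that span_zero by (simp add: abelian_set_def)
  ultimately have "br a b \<in> span {y}" for a b
    using br_in_subspace_of_span_insert[OF \<open>subspace M\<close> subspace_span] L by blast
  then have "derived_algebra scale br \<subseteq> span {y}"
    by (simp add: derived_algebra_subset)
  moreover have "span {y} \<subseteq> derived_algebra scale br"
    using br_in_derived_algebra[of m0 y] \<open>br m0 y = y\<close>
    by (simp add: span_minimal subspace_derived_algebra)
  ultimately have D: "derived_algebra scale br = span {y}" by blast
  have "y \<noteq> 0"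
    using \<open>y \<notin> M\<close> subspace_0[OF \<open>subspace M\<close>] by blast
  then show "dim (derived_algebra scale br) = 1"
    by (simp add: D)
  have "frattini_ideal scale br \<subseteq> M \<inter> span {y}"
    using frattini_ideal_subset_maximal[OF M] frattini_ideal_subset_derived_algebra D by blast
  also have "M \<inter> span {y} \<subseteq> {0}"
  proof
    fix v assume "v \<in> M \<inter> span {y}"
    then obtain k where k: "k *s y \<in> M" "v = k *s y" by (auto simp: span_singleton)
    then show "v \<in> {0}"
      using \<open>y \<notin> M\<close> subspace_scale[OF \<open>subspace M\<close> k(1), of "inverse k"] by (cases "k = 0") auto
  qed
  finally show "frattini_ideal scale br = {0}"
    using span_zero[of "\<Union>_"] by (auto simp: frattini_ideal_def)
qed

lemma completely_solvable_if_codim_1_abelian_ideal: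
  assumes "lie_ideal scale br I" "abelian_set br I" "dim I + 1 = dim (UNIV :: 'v set)"
  shows "completely_solvable scale br"
  using assms derived_algebra_subset_codim_1_ideal
  by (intro completely_solvable_if_abelian_derived_algebra) (auto simp: abelian_set_def)

lemma exists_maximal_abelian_iff:
  assumes alg: "alg_closed_field TYPE('a)"
  shows "(\<exists>M. maximal_subalgebra scale br M \<and> abelian_set br M) \<longleftrightarrow>
    (\<exists>I. lie_ideal scale br I \<and> abelian_set br I \<and> dim I + 1 = dim (UNIV :: 'v set))
    \<or> (dim (derived_algebra scale br) = 1 \<and> frattini_ideal scale br = {0})"
proof
  assume "\<exists>M. maximal_subalgebra scale br M \<and> abelian_set br M"
  then obtain M where M: "maximal_subalgebra scale br M" and ab: "abelian_set br M" by blast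
  show "(\<exists>I. lie_ideal scale br I \<and> abelian_set br I \<and> dim I + 1 = dim (UNIV :: 'v set))
    \<or> (dim (derived_algebra scale br) = 1 \<and> frattini_ideal scale br = {0})"
  proof (cases "lie_ideal scale br M")
    case True
    with M ab codim_1_if_maximal_ideal show ?thesis by blast
  next
    case False
    with derived_algebra_and_frattini_if_maximal_abelian_non_ideal[OF alg M ab] show ?thesis
      by blast
  qed
next
  assume "(\<exists>I. lie_ideal scale br I \<and> abelian_set br I \<and> dim I + 1 = dim (UNIV :: 'v set))
    \<or> (dim (derived_algebra scale br) = 1 \<and> frattini_ideal scale br = {0})"
  then show "\<exists>M. maximal_subalgebra scale br M \<and> abelian_set br M"
    using maximal_subalgebra_if_codim_1 lie_subalgebra_if_ideal
      exists_maximal_abelian_if_dim_derived_algebra_eq_1 by blast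
qed

end

lemma finite_dimensional_vector_space_if_fin_dim:
  assumes "vector_space sc" "fin_dim sc"
  shows "\<exists>Basis. finite_dimensional_vector_space sc Basis"
proof -
  interpret vector_space sc by fact
  obtain S where "finite S" "span S = UNIV"
    using assms(2) by (auto simp: fin_dim_def)
  moreover obtain B where "B \<subseteq> S" "independent B" "S \<subseteq> span B"
    by (rule maximal_independent_subset)
  ultimately have "finite B" "span B = UNIV"
    using span_minimal[of S "span B"] by (auto simp: finite_subset)
  with \<open>independent B\<close> show ?thesis
    by (auto simp: finite_dimensional_vector_space_def finite_dimensional_vector_space_axioms_def
        intro: \<open>vector_space sc\<close>)
qed

theorem proposition3p2:
  fixes sc :: "'a::field \<Rightarrow> 'v::ab_group_add \<Rightarrow> 'v"
    and br :: "'v \<Rightarrow> 'v \<Rightarrow> 'v"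
  assumes "alg_closed_field TYPE('a)"
    and "lie_algebra sc br"
    and "fin_dim sc"
  shows "((\<exists>M. maximal_subalgebra sc br M \<and> abelian_set br M) \<longleftrightarrow>
          ((\<exists>I. lie_ideal sc br I \<and> abelian_set br I
                \<and> vector_space.dim sc I + 1 = vector_space.dim sc (UNIV :: 'v set))
           \<or> (vector_space.dim sc (derived_algebra sc br) = 1 \<and> frattini_ideal sc br = {0})))
       \<and> (((\<exists>I. lie_ideal sc br I \<and> abelian_set br I
                \<and> vector_space.dim sc I + 1 = vector_space.dim sc (UNIV :: 'v set))
           \<or> (vector_space.dim sc (derived_algebra sc br) = 1 \<and> frattini_ideal sc br = {0}))
          \<longrightarrow> completely_solvable sc br)"
proof -
  have "vector_space sc"
    using assms(2) by (simp add: lie_algebra_def)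
  then obtain Basis where "finite_dimensional_vector_space sc Basis"
    using finite_dimensional_vector_space_if_fin_dim assms(3) by blast
  then interpret finite_dimensional_lie_alg sc br Basis
    using assms(2) by (simp add: finite_dimensional_lie_alg_def lie_alg_def lie_alg_axioms_def
        finite_dimensional_vector_space.axioms(1))
  show ?thesis
    using exists_maximal_abelian_iff[OF assms(1)] completely_solvable_if_codim_1_abelian_ideal
      completely_solvable_if_dim_derived_algebra_eq_1 by blast
qed

end
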